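(* Let $R$ be a commutative ring with identity whose set of zero-divisors $Z_R$ contains a nonzero element, $n>1$, $S=M_n(R)$, and let $d$ denote distance in the orthogonality graph $O(S)$. (1) For every vertex $A$ of $O(S)$ there exists $b\in Z_R\setminus\{0\}$ with $d(A,bE)\le 2$ (and $bE$ is a vertex of $O(S)$). (2) If $A_1,A_2$ are vertices of $O(S)$ with $\operatorname{Ann}(\det A_1)\cap\operatorname{Ann}(\det A_2)\ne0$, then $d(A_1,A_2)\le 4$.
   Context: The orthogonality graph $O(S)$ of a ring $S$ is the undirected graph whose vertices are the nonzero two-sided zero-divisors of $S$, distinct vertices $x,y$ being adjacent iff $xy=yx=0$; $d$ is the graph distance. $Z_R$ is the set of zero-divisors of $R$ (including $0$), $\operatorname{Ann}(a)=\{x\in R:ax=0\}$, $E$ is the identity matrix. *)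

theory Defs
  imports "HOL-Analysis.Analysis" "HOL-Library.Extended_Nat"
begin

definition zero_divisors :: "'a::comm_ring_1 set" where
  "zero_divisors = {x. \<exists>y. y \<noteq> 0 \<and> x * y = 0}"

definition Ann :: "'a::comm_ring_1 \<Rightarrow> 'a set" where
  "Ann a = {x. a * x = 0}"

definition orth_vertex :: "'a::comm_ring_1^'n^'n \<Rightarrow> bool" where
  "orth_vertex A \<longleftrightarrow> A \<noteq> 0 \<and> (\<exists>B::'a^'n^'n. B \<noteq> 0 \<and> A ** B = 0) \<and> (\<exists>C::'a^'n^'n. C \<noteq> 0 \<and> C ** A = 0)"

definition orth_adj :: "'a::comm_ring_1^'n^'n \<Rightarrow> 'a^'n^'n \<Rightarrow> bool" where
  "orth_adj A B \<longleftrightarrow> orth_vertex A \<and> orth_vertex B \<and> A \<noteq> B \<and> A ** B = 0 \<and> B ** A = 0"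

fun is_walk :: "('v \<Rightarrow> 'v \<Rightarrow> bool) \<Rightarrow> 'v list \<Rightarrow> bool" where
  "is_walk E [] = False"
| "is_walk E [x] = True"
| "is_walk E (x # y # xs) = (E x y \<and> is_walk E (y # xs))"

definition graph_dist :: "('v \<Rightarrow> 'v \<Rightarrow> bool) \<Rightarrow> 'v \<Rightarrow> 'v \<Rightarrow> enat" where
  "graph_dist E x y =
     (INF xs \<in> {xs. is_walk E xs \<and> hd xs = x \<and> last xs = y}. enat (length xs - 1))"

end

theory Submission
  imports Defs
begin

text \<open>Every vertex A has det A annihilated by some c \<noteq> 0: if A B = 0 with B \<noteq> 0, then
   det A kills every entry of B, because adjugate A ** A = det A \<cdot> E.
   McCoy's argument upgrades c * det A = 0 to a nonzero Y = c X with A Y = Y A = 0: pick r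
   such that c kills all (r+1)-minors of A but not some r-minor; bordering that r-minor to an
   (r+1)-minor matrix M, the matrix c \<cdot> adjugate M (moved back into position) annihilates A
   on both sides, and one of its entries is c times the r-minor.
   If moreover c is a zero-divisor, any d \<noteq> 0 with d c = 0 makes d E a vertex orthogonal
   to Y, which gives the path A - Y - d E.  For (2), a common annihilator of det A1 and
   det A2 yields the path A1 - Y1 - d E - Y2 - A2.\<close>

definition replace_row :: "'a^'n^'m \<Rightarrow> 'm \<Rightarrow> 'a^'n \<Rightarrow> 'a^'n^'m" where
  "replace_row M i w = (\<chi> k. if k = i then w else M$k)"

definition replace_col :: "'a^'n^'m \<Rightarrow> 'n \<Rightarrow> 'a^'m \<Rightarrow> 'a^'n^'m" where
  "replace_col M j v = (\<chi> k l. if l = j then v$k else M$k$l)"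

definition adjugate :: "'a::comm_ring_1^'n^'n \<Rightarrow> 'a^'n^'n" where
  "adjugate M = (\<chi> j i. det (replace_row M i (axis j 1)))"

lemma replace_col_transpose: "replace_col M j v = transpose (replace_row (transpose M) j v)"
  by (simp add: replace_col_def replace_row_def transpose_def vec_eq_iff)

lemma det_replace_row:
  fixes M :: "'a::comm_ring_1^'n^'n"
  shows "det (replace_row M i w) = (w v* adjugate M) $ i"
proof -
  have "replace_row M i w = (\<chi> k. if k = i then (\<Sum>j\<in>UNIV. (w$j) *s axis j 1) else M$k)"
    unfolding replace_row_def basis_expansion ..
  also have "det \<dots> = (\<Sum>j\<in>UNIV. det ((\<chi> k. if k = i then (w$j) *s axis j 1 else M$k)::'a^'n^'n))"
    by (rule det_linear_row_sum) simp
  also have "\<dots> = (\<Sum>j\<in>UNIV. w$j * adjugate M $ j $ i)"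
    unfolding adjugate_def replace_row_def
    by (rule sum.cong[OF refl]) (simp add: det_row_mul[of i "w$_" "\<lambda>_. axis _ 1" "\<lambda>k. M$k"])
  finally show ?thesis by (simp add: vector_matrix_mult_def)
qed

lemma det_eq_if_unit_row:
  fixes N N' :: "'a::comm_ring_1^'n^'n"
  assumes "N$i = axis j 1" "N'$i = axis j 1"
    and "\<And>k l. k \<noteq> i \<Longrightarrow> l \<noteq> j \<Longrightarrow> N$k$l = N'$k$l"
  shows "det N = det N'"
  unfolding det_def
proof (rule sum.cong[OF refl])
  fix p assume "p \<in> {p. p permutes (UNIV::'n set)}"
  then have p: "p permutes (UNIV::'n set)" by simp
  have row_i: "N$i$l = (if l = j then 1 else 0)" "N'$i$l = (if l = j then 1 else 0)" for l
    using assms(1,2) by (simp_all add: axis_def)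
  have "(\<Prod>k\<in>UNIV. N $ k $ p k) = (\<Prod>k\<in>UNIV. N' $ k $ p k)"
  proof (cases "p i = j")
    case True
    have "N $ k $ p k = N' $ k $ p k" for k
    proof (cases "k = i")
      case False
      then have "p k \<noteq> j" using True p by (metis permutes_inj injD)
      then show ?thesis using False assms(3) by simp
    qed (simp add: row_i)
    then show ?thesis by simp
  next
    case False
    then have "N $ i $ p i = 0" "N' $ i $ p i = 0" by (simp_all add: row_i)
    then have "(\<Prod>k\<in>UNIV. N $ k $ p k) = 0" "(\<Prod>k\<in>UNIV. N' $ k $ p k) = 0"
      by (auto intro!: prod_zero bexI[of _ i])
    then show ?thesis by simp
  qed
  then show "of_int (sign p) * (\<Prod>k\<in>UNIV. N $ k $ p k) = of_int (sign p) * (\<Prod>k\<in>UNIV. N' $ k $ p k)"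
    by simp
qed

lemma det_eq_if_unit_col:
  fixes N N' :: "'a::comm_ring_1^'n^'n"
  assumes "column j N = axis i 1" "column j N' = axis i 1"
    and "\<And>k l. k \<noteq> i \<Longrightarrow> l \<noteq> j \<Longrightarrow> N$k$l = N'$k$l"
  shows "det N = det N'"
proof -
  have "det (transpose N) = det (transpose N')"
    using assms by (intro det_eq_if_unit_row[of _ j i]) (simp_all add: transpose_def column_def)
  then show ?thesis by simp
qed

lemma adjugate_transpose:
  fixes M :: "'a::comm_ring_1^'n^'n"
  shows "adjugate (transpose M) = transpose (adjugate M)"
proof -
  have "det (replace_col M j (axis i 1)) = det (replace_row M i (axis j 1))" for i j
  proof -
    define N where "N = (\<chi> k l. if k = i then axis j 1 $ l else if l = j then 0 else M$k$l)"
    have "det (replace_col M j (axis i 1)) = det N"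
      by (rule det_eq_if_unit_col) (auto simp: N_def replace_col_def column_def axis_def vec_eq_iff)
    also have "\<dots> = det (replace_row M i (axis j 1))"
      by (rule det_eq_if_unit_row) (auto simp: N_def replace_row_def axis_def vec_eq_iff)
    finally show ?thesis .
  qed
  moreover have "det (replace_row (transpose M) j w) = det (replace_col M j w)" for j w
    by (simp add: replace_col_transpose)
  ultimately show ?thesis by (simp add: adjugate_def vec_eq_iff transpose_def)
qed

lemma det_replace_col:
  fixes M :: "'a::comm_ring_1^'n^'n"
  shows "det (replace_col M j v) = (adjugate M *v v) $ j"
  by (simp add: replace_col_transpose det_replace_row adjugate_transpose)

lemma adjugate_mult: "adjugate A ** A = mat (det A)"
proof -
  have "(adjugate A ** A) $ j $ q = det (replace_col A j (column q A))" for j q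
    by (simp add: det_replace_col matrix_matrix_mult_def matrix_vector_mult_def column_def)
  moreover have "replace_col A j (column j A) = A" for j
    by (simp add: replace_col_def column_def vec_eq_iff)
  moreover have "det (replace_col A j (column q A)) = 0" if "q \<noteq> j" for j q
    by (rule det_identical_columns[OF that]) (simp add: replace_col_def column_def vec_eq_iff)
  ultimately have "(adjugate A ** A) $ j $ q = (if j = q then det A else 0)" for j q
    by (cases "q = j") auto
  then show ?thesis by (simp add: mat_def vec_eq_iff)
qed

lemma mat_mult_left: "(mat c :: 'a::comm_ring_1^'n^'n) ** M = (\<chi> i j. c * M$i$j)"
proof -
  have "(\<Sum>k\<in>UNIV. (if i = k then c else 0) * M$k$j) = c * M$i$j" for i j
    by (simp add: if_distrib[of "\<lambda>x. x * _"] cong: if_cong)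
  then show ?thesis by (simp add: vec_eq_iff matrix_matrix_mult_def mat_def)
qed

lemma mat_commute: "M ** (mat c :: 'a::comm_ring_1^'n^'n) = mat c ** M"
proof -
  have "(\<Sum>k\<in>UNIV. M$i$k * (if k = j then c else 0)) = c * M$i$j" for i j
    by (simp add: if_distrib[of "\<lambda>x. _ * x"] mult.commute cong: if_cong)
  then show ?thesis unfolding mat_mult_left by (simp add: vec_eq_iff matrix_matrix_mult_def mat_def)
qed

lemma mat_mult_left_commute: "M ** ((mat c :: 'a::comm_ring_1^'n^'n) ** N) = mat c ** (M ** N)"
  by (metis mat_commute matrix_mul_assoc)

lemma det_mult_annihilator:
  fixes A B :: "'a::comm_ring_1^'n^'n"
  assumes "A ** B = 0"
  shows "det A * B$i$j = 0"
proof -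
  have "mat (det A) ** B = 0"
    by (simp flip: adjugate_mult add: matrix_mul_assoc[symmetric] assms)
  then show ?thesis by (simp add: mat_mult_left vec_eq_iff)
qed

text \<open>If \<open>\<sigma>\<close> maps \<open>-I\<close> bijectively onto \<open>-J\<close>, then \<open>det (minor_matrix A I J \<sigma> \<rho> \<kappa>)\<close>
  is, up to sign, the minor of \<open>A\<close> with rows \<open>\<rho> ` I\<close> and columns \<open>\<kappa> ` J\<close> (zero when \<open>\<rho>\<close> or
  \<open>\<kappa>\<close> is not injective on \<open>I\<close> resp. \<open>J\<close>).\<close>
definition minor_matrix ::
    "'a::comm_ring_1^'n^'n \<Rightarrow> 'n set \<Rightarrow> 'n set \<Rightarrow>
      ('n \<Rightarrow> 'n) \<Rightarrow> ('n \<Rightarrow> 'n) \<Rightarrow> ('n \<Rightarrow> 'n) \<Rightarrow> 'a^'n^'n" where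
  "minor_matrix A I J \<sigma> \<rho> \<kappa> =
     (\<chi> i j. if i \<in> I then (if j \<in> J then A$\<rho> i$\<kappa> j else 0) else (if j = \<sigma> i then 1 else 0))"

definition annihilates_minors :: "'a::comm_ring_1 \<Rightarrow> 'a^'n^'n \<Rightarrow> nat \<Rightarrow> bool" where
  "annihilates_minors c A t \<longleftrightarrow>
     (\<forall>I J \<sigma> \<rho> \<kappa>. card I = t \<longrightarrow> bij_betw \<sigma> (-I) (-J) \<longrightarrow>
        c * det (minor_matrix A I J \<sigma> \<rho> \<kappa>) = 0)"

definition selector :: "'n set \<Rightarrow> ('n \<Rightarrow> 'n) \<Rightarrow> 'a::comm_ring_1^'n^'n" where
  "selector I \<rho> = (\<chi> i q. if i \<in> I \<and> q = \<rho> i then 1 else 0)"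

lemma selector_mult: "(selector I \<rho> ** A) $ i $ q = (if i \<in> I then A $ \<rho> i $ q else 0)"
  by (simp add: selector_def matrix_matrix_mult_def if_distrib[of "\<lambda>x. x * _"] cong: if_cong)

lemma mult_transpose_selector:
  "(A ** transpose (selector J \<kappa>)) $ p $ j = (if j \<in> J then A $ p $ \<kappa> j else 0)"
  by (simp add: selector_def transpose_def matrix_matrix_mult_def if_distrib[of "\<lambda>x. _ * x"] cong: if_cong)

lemma not_annihilates_minors_0:
  assumes "c \<noteq> 0"
  shows "\<not> annihilates_minors c (A::'a::comm_ring_1^'n^'n) 0"
proof
  assume "annihilates_minors c A 0"
  then have "c * det (minor_matrix A {} {} id id id) = 0"
    unfolding annihilates_minors_def by (auto simp: bij_betw_def)
  moreover have "minor_matrix A {} {} id id id = mat 1"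
    by (auto simp: minor_matrix_def mat_def vec_eq_iff)
  ultimately show False using assms by simp
qed

lemma annihilates_minors_CARD:
  fixes A :: "'a::comm_ring_1^'n^'n"
  assumes "c * det A = 0"
  shows "annihilates_minors c A CARD('n)"
  unfolding annihilates_minors_def
proof (intro allI impI)
  fix I J :: "'n set" and \<sigma> \<rho> \<kappa>
  assume "card I = CARD('n)" "bij_betw \<sigma> (-I) (-J)"
  then have I: "I = UNIV" by (simp add: card_eq_UNIV_imp_eq_UNIV)
  with \<open>bij_betw \<sigma> (-I) (-J)\<close> have J: "J = UNIV" by (auto simp: bij_betw_def)
  have "minor_matrix A I J \<sigma> \<rho> \<kappa> = selector UNIV \<rho> ** A ** transpose (selector UNIV \<kappa>)"
    by (simp add: I J minor_matrix_def vec_eq_iff mult_transpose_selector selector_mult)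
  moreover have "c * det (selector UNIV \<rho> ** A ** transpose (selector UNIV \<kappa>)) =
      det (selector UNIV \<rho> :: 'a^'n^'n) * (c * det A) * det (transpose (selector UNIV \<kappa>) :: 'a^'n^'n)"
    by (simp add: det_mul mult_ac)
  ultimately show "c * det (minor_matrix A I J \<sigma> \<rho> \<kappa>) = 0"
    using assms by simp
qed

lemma matrix_mult_eq_0_if_vanishing:
  fixes M N :: "'a::comm_ring_1^'n^'n"
  assumes "\<And>k. (\<forall>p. M$p$k = 0) \<or> (\<forall>q. N$k$q = 0)"
  shows "M ** N = 0"
  using assms by (auto simp: vec_eq_iff matrix_matrix_mult_def intro!: sum.neutral) (metis mult_zero_left mult_zero_right)

text \<open>Replacing a row of \<open>minor_matrix A I J \<sigma> \<rho> \<kappa>\<close> indexed by \<open>I\<close> by a row of \<open>A\<close>, or a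
  column indexed by \<open>J\<close> by a column of \<open>A\<close>, gives another minor matrix of the same size.
  Hence the Laplace expansions of the entries of \<open>A ** X\<close> and \<open>X ** A\<close> are minors that
  \<open>c\<close> kills.\<close>
lemma adjugate_minor_matrix_annihilator:
  fixes A :: "'a::comm_ring_1^'n^'n" and \<rho> \<kappa> :: "'n \<Rightarrow> 'n"
  assumes kill: "\<And>\<rho>' \<kappa>'. c * det (minor_matrix A I J \<sigma> \<rho>' \<kappa>') = 0"
    and \<sigma>: "bij_betw \<sigma> (-I) (-J)"
  defines "X \<equiv> transpose (selector J \<kappa>) ** adjugate (minor_matrix A I J \<sigma> \<rho> \<kappa>) ** selector I \<rho>"
  shows "A ** (mat c ** X) = 0" and "(mat c ** X) ** A = 0"
proof -
  let ?M = "minor_matrix A I J \<sigma> \<rho> \<kappa>"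
  let ?AV = "A ** transpose (selector J \<kappa>)" and ?UA = "selector I \<rho> ** A"
  have "(?AV ** adjugate ?M) $ p $ i = det (minor_matrix A I J \<sigma> (\<rho>(i := p)) \<kappa>)" if "i \<in> I" for p i
  proof -
    have "(?AV ** adjugate ?M) $ p $ i = det (replace_row ?M i (row p ?AV))"
      by (simp add: det_replace_row matrix_matrix_mult_def vector_matrix_mult_def row_def)
    also have "replace_row ?M i (row p ?AV) = minor_matrix A I J \<sigma> (\<rho>(i := p)) \<kappa>"
      using that by (auto simp: vec_eq_iff replace_row_def minor_matrix_def row_def mult_transpose_selector)
    finally show ?thesis .
  qed
  then have "(mat c ** (?AV ** adjugate ?M)) $ p $ i = 0" if "i \<in> I" for p i
    using that kill by (simp add: mat_mult_left)
  moreover have "selector I \<rho> $ i $ q = 0" if "i \<notin> I" for i q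
    using that by (simp add: selector_def)
  ultimately have "(mat c ** (?AV ** adjugate ?M)) ** selector I \<rho> = 0"
    by (intro matrix_mult_eq_0_if_vanishing) blast
  moreover have "A ** (mat c ** X) = (mat c ** (?AV ** adjugate ?M)) ** selector I \<rho>"
    by (simp add: X_def mat_mult_left_commute flip: matrix_mul_assoc)
  ultimately show "A ** (mat c ** X) = 0" by simp
  have "(adjugate ?M ** ?UA) $ j $ q = det (minor_matrix A I J \<sigma> \<rho> (\<kappa>(j := q)))" if "j \<in> J" for j q
  proof -
    have "\<sigma> i \<notin> J" if "i \<notin> I" for i
      using \<sigma> that by (auto simp: bij_betw_def)
    have "(adjugate ?M ** ?UA) $ j $ q = det (replace_col ?M j (column q ?UA))"
      by (simp add: det_replace_col matrix_matrix_mult_def matrix_vector_mult_def column_def)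
    also have "replace_col ?M j (column q ?UA) = minor_matrix A I J \<sigma> \<rho> (\<kappa>(j := q))"
      using that \<open>\<And>i. i \<notin> I \<Longrightarrow> \<sigma> i \<notin> J\<close>
      by (auto simp: vec_eq_iff replace_col_def minor_matrix_def column_def selector_mult)
    finally show ?thesis .
  qed
  then have "(mat c ** (adjugate ?M ** ?UA)) $ j $ q = 0" if "j \<in> J" for j q
    using that kill by (simp add: mat_mult_left)
  moreover have "transpose (selector J \<kappa>) $ m $ j = 0" if "j \<notin> J" for m j
    using that by (simp add: selector_def transpose_def)
  ultimately have "transpose (selector J \<kappa>) ** (mat c ** (adjugate ?M ** ?UA)) = 0"
    by (intro matrix_mult_eq_0_if_vanishing) blast
  moreover have "(mat c ** X) ** A = transpose (selector J \<kappa>) ** (mat c ** (adjugate ?M ** ?UA))"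
    by (simp add: X_def mat_mult_left_commute flip: matrix_mul_assoc)
  ultimately show "(mat c ** X) ** A = 0" by simp
qed

lemma card_Compl_finite: "card (- (A::'n::finite set)) = CARD('n) - card A"
  by (simp add: Compl_eq_Diff_UNIV card_Diff_subset)

lemma adjugate_bordered_minor_matrix_entry:
  fixes A :: "'a::comm_ring_1^'n^'n"
  assumes i0: "i0 \<notin> I" and k0: "\<sigma> i0 \<notin> J" and a: "a \<notin> \<rho> ` I" and b: "b \<notin> \<kappa> ` J"
  defines "I' \<equiv> insert i0 I" and "J' \<equiv> insert (\<sigma> i0) J"
    and "\<rho>' \<equiv> \<rho>(i0 := a)" and "\<kappa>' \<equiv> \<kappa>(\<sigma> i0 := b)"
  shows "(transpose (selector J' \<kappa>') ** adjugate (minor_matrix A I' J' \<sigma> \<rho>' \<kappa>') ** selector I' \<rho>')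
           $ b $ a = det (minor_matrix A I J \<sigma> \<rho> \<kappa>)"
proof -
  let ?M = "minor_matrix A I' J' \<sigma> \<rho>' \<kappa>'"
  have U: "selector I' \<rho>' $ i $ a = (if i = i0 then 1 else 0)" for i
    using a i0 by (auto simp: selector_def I'_def \<rho>'_def)
  have V: "selector J' \<kappa>' $ j $ b = (if j = \<sigma> i0 then 1 else 0)" for j
    using b k0 by (auto simp: selector_def J'_def \<kappa>'_def)
  have "(transpose (selector J' \<kappa>') ** adjugate ?M ** selector I' \<rho>') $ b $ a = adjugate ?M $ \<sigma> i0 $ i0"
    by (simp add: matrix_matrix_mult_def transpose_def U V if_distrib[of "\<lambda>x. x * _"]
        if_distrib[of "\<lambda>x. _ * x"] cong: if_cong)
  also have "\<dots> = det (minor_matrix A I J \<sigma> \<rho> \<kappa>)"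
    unfolding adjugate_def using i0 k0
    by (simp, intro det_eq_if_unit_row[of _ i0 "\<sigma> i0"])
      (auto simp: replace_row_def axis_def vec_eq_iff minor_matrix_def I'_def J'_def \<rho>'_def \<kappa>'_def)
  finally show ?thesis .
qed

lemma two_sided_annihilator_in_multiples:
  fixes A :: "'a::comm_ring_1^'n^'n"
  assumes "c \<noteq> 0" "c * det A = 0"
  shows "\<exists>X. mat c ** X \<noteq> 0 \<and> A ** (mat c ** X) = 0 \<and> (mat c ** X) ** A = 0"
proof -
  have "\<exists>r<n. \<not> P r \<and> P (Suc r)" if "\<not> P 0" "P n" for P :: "nat \<Rightarrow> bool" and n
    using that by (induction n) (auto intro: less_SucI)
  from this[of "annihilates_minors c A", OF not_annihilates_minors_0[OF assms(1)]
      annihilates_minors_CARD[OF assms(2)]]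
  obtain r I J \<sigma> \<rho> \<kappa> where r: "r < CARD('n)" "annihilates_minors c A (Suc r)"
    and I: "card I = r" and \<sigma>: "bij_betw \<sigma> (-I) (-J)"
    and minor: "c * det (minor_matrix A I J \<sigma> \<rho> \<kappa>) \<noteq> 0"
    unfolding annihilates_minors_def by blast
  have "card J = r"
    using bij_betw_same_card[OF \<sigma>] I r(1) card_Compl_finite[of I] card_Compl_finite[of J]
      card_mono[of UNIV J] by simp
  have "I \<noteq> UNIV" "\<rho> ` I \<noteq> UNIV" "\<kappa> ` J \<noteq> UNIV"
    using I r(1) \<open>card J = r\<close> card_image_le[of I \<rho>] card_image_le[of J \<kappa>] by auto
  then obtain i0 a b where i0: "i0 \<notin> I" and a: "a \<notin> \<rho> ` I" and b: "b \<notin> \<kappa> ` J" by blast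
  have k0: "\<sigma> i0 \<notin> J" using \<sigma> i0 by (auto simp: bij_betw_def)
  define I' J' \<rho>' \<kappa>' where "I' = insert i0 I" and "J' = insert (\<sigma> i0) J"
    and "\<rho>' = \<rho>(i0 := a)" and "\<kappa>' = \<kappa>(\<sigma> i0 := b)"
  have \<sigma>': "bij_betw \<sigma> (-I') (-J')"
    using bij_betw_DiffI[OF \<sigma>, of "{i0}" "{\<sigma> i0}"] i0 k0
    by (simp add: I'_def J'_def Compl_insert bij_betw_def)
  have "card I' = Suc r" using i0 I by (simp add: I'_def)
  then have "c * det (minor_matrix A I' J' \<sigma> \<rho>'' \<kappa>'') = 0" for \<rho>'' \<kappa>''
    using r(2) \<sigma>' unfolding annihilates_minors_def by blast
  define X where
    "X = transpose (selector J' \<kappa>') ** adjugate (minor_matrix A I' J' \<sigma> \<rho>' \<kappa>') ** selector I' \<rho>'"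
  have "A ** (mat c ** X) = 0" "(mat c ** X) ** A = 0"
    unfolding X_def by (rule adjugate_minor_matrix_annihilator; fact)+
  moreover have "X $ b $ a = det (minor_matrix A I J \<sigma> \<rho> \<kappa>)"
    unfolding X_def I'_def J'_def \<rho>'_def \<kappa>'_def
    using i0 k0 a b by (rule adjugate_bordered_minor_matrix_entry)
  then have "(mat c ** X) $ b $ a \<noteq> 0"
    using minor by (simp add: mat_mult_left)
  then have "mat c ** X \<noteq> 0" by auto
  ultimately show ?thesis by blast
qed

lemma reflexive_walk_shortens:
  assumes "is_walk (\<lambda>x y. x = y \<or> E x y) xs"
  shows "\<exists>ys. is_walk E ys \<and> hd ys = hd xs \<and> last ys = last xs \<and> length ys \<le> length xs"
  using assms
proof (induction xs rule: induct_list012)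
  case (3 x y zs)
  then obtain ys where ys: "is_walk E ys" "hd ys = y" "last ys = last (y # zs)"
    "length ys \<le> length (y # zs)" by auto
  then have "ys \<noteq> []" by auto
  show ?case
  proof (cases "x = y")
    case True
    then show ?thesis using ys by (intro exI[of _ ys]) auto
  next
    case False
    then have "is_walk E (x # ys)" using 3(3) ys(1,2) \<open>ys \<noteq> []\<close> by (cases ys) auto
    then show ?thesis using ys \<open>ys \<noteq> []\<close> by (intro exI[of _ "x # ys"]) auto
  qed
qed (auto intro: exI[of _ "[_]"])

lemma graph_dist_le_reflexive_walk:
  assumes "is_walk (\<lambda>x y. x = y \<or> E x y) xs" "hd xs = a" "last xs = b"
  shows "graph_dist E a b \<le> enat (length xs - 1)"
proof -
  obtain ys where ys: "is_walk E ys" "hd ys = a" "last ys = b" "length ys \<le> length xs"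
    using reflexive_walk_shortens[OF assms(1)] assms(2,3) by auto
  have "graph_dist E a b \<le> enat (length ys - 1)"
    unfolding graph_dist_def by (rule INF_lower) (use ys in auto)
  also have "\<dots> \<le> enat (length xs - 1)" using ys(4) by simp
  finally show ?thesis .
qed

lemma orth_adj_sym: "orth_adj A B \<longleftrightarrow> orth_adj B A"
  by (auto simp: orth_adj_def)

lemma eq_or_orth_adj:
  assumes "A \<noteq> 0" "B \<noteq> 0" "A ** B = 0" "B ** A = 0"
  shows "A = B \<or> orth_adj A B"
  using assms by (auto simp: orth_adj_def orth_vertex_def)

lemma mat_mult_mat: "(mat a :: 'a::comm_ring_1^'n^'n) ** mat b = mat (a * b)"
  unfolding mat_mult_left by (simp add: mat_def vec_eq_iff)

lemma mat_eq_0_iff: "(mat a :: 'a::zero^'n^'n) = 0 \<longleftrightarrow> a = 0"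
  by (auto simp: mat_def vec_eq_iff)

lemma scalar_vertex_annihilating:
  assumes "c \<in> zero_divisors" "c \<noteq> 0"
  shows "\<exists>d. d \<in> zero_divisors - {0} \<and> d * c = 0 \<and> orth_vertex (mat d :: 'a::comm_ring_1^'n^'n)"
proof -
  obtain d where d: "d \<noteq> 0" "d * c = 0"
    using assms(1) by (auto simp: zero_divisors_def mult.commute)
  then have "(mat d :: 'a^'n^'n) ** mat c = 0" "(mat c :: 'a^'n^'n) ** mat d = 0"
    by (simp_all add: mat_mult_mat mult.commute)
  then have "orth_vertex (mat d :: 'a^'n^'n)"
    unfolding orth_vertex_def using d(1) assms(2) mat_eq_0_iff by blast
  moreover have "d \<in> zero_divisors" using d assms(2) by (auto simp: zero_divisors_def)
  ultimately show ?thesis using d by blast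
qed

lemma orth_path_to_scalar:
  fixes A :: "'a::comm_ring_1^'n^'n"
  assumes "orth_vertex A" "c \<noteq> 0" "c * det A = 0" "d \<noteq> 0" "d * c = 0"
  shows "\<exists>Y. (A = Y \<or> orth_adj A Y) \<and> (Y = mat d \<or> orth_adj Y (mat d))"
proof -
  obtain X where Y: "mat c ** X \<noteq> 0" "A ** (mat c ** X) = 0" "(mat c ** X) ** A = 0"
    using two_sided_annihilator_in_multiples[OF assms(2,3)] by blast
  have "mat d ** (mat c ** X) = 0"
    by (simp add: matrix_mul_assoc mat_mult_mat assms(5))
  moreover then have "(mat c ** X) ** mat d = 0" by (simp add: mat_commute)
  moreover have "A \<noteq> 0" "(mat d :: 'a^'n^'n) \<noteq> 0"
    using assms(1,4) by (simp_all add: orth_vertex_def mat_eq_0_iff)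
  ultimately have "A = mat c ** X \<or> orth_adj A (mat c ** X)"
    and "mat c ** X = mat d \<or> orth_adj (mat c ** X) (mat d)"
    using Y by (simp_all add: eq_or_orth_adj)
  then show ?thesis by blast
qed

lemma det_annihilator_of_orth_vertex:
  assumes "orth_vertex (A :: 'a::comm_ring_1^'n^'n)"
  shows "\<exists>c. c \<noteq> 0 \<and> c * det A = 0"
proof -
  obtain B :: "'a^'n^'n" where B: "B \<noteq> 0" "A ** B = 0"
    using assms by (auto simp: orth_vertex_def)
  then obtain i j where "B $ i $ j \<noteq> 0" by (auto simp: vec_eq_iff)
  moreover have "det A * B $ i $ j = 0" using det_mult_annihilator[OF B(2)] .
  ultimately show ?thesis by (intro exI[of _ "B $ i $ j"]) (simp add: mult.commute)
qed

lemma common_annihilator_in_zero_divisors: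
  fixes a b c z :: "'a::comm_ring_1"
  assumes "z \<in> zero_divisors - {0}" "c \<noteq> 0" "c * a = 0" "c * b = 0"
  shows "\<exists>c'. c' \<in> zero_divisors - {0} \<and> c' * a = 0 \<and> c' * b = 0"
proof (cases "a = 0 \<and> b = 0")
  case True
  then show ?thesis using assms(1) by auto
next
  case False
  then have "c \<in> zero_divisors" using assms(3,4) by (auto simp: zero_divisors_def)
  then show ?thesis using assms(2-4) by auto
qed

lemma orth_vertex_near_scalar_vertex:
  fixes A :: "'a::comm_ring_1^'n^'n" and z :: 'a
  assumes z: "z \<in> zero_divisors - {0}" and A: "orth_vertex A"
  shows "\<exists>b. b \<in> zero_divisors - {0} \<and> orth_vertex (mat b :: 'a^'n^'n) \<and> graph_dist orth_adj A (mat b) \<le> 2"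
proof -
  obtain c0 where "c0 \<noteq> 0" "c0 * det A = 0" using det_annihilator_of_orth_vertex[OF A] by blast
  with z obtain c where c: "c \<in> zero_divisors - {0}" "c * det A = 0"
    using common_annihilator_in_zero_divisors by blast
  then obtain d where d: "d \<in> zero_divisors - {0}" "d * c = 0" "orth_vertex (mat d :: 'a^'n^'n)"
    using scalar_vertex_annihilating by blast
  obtain Y where "A = Y \<or> orth_adj A Y" "Y = mat d \<or> orth_adj Y (mat d)"
    using orth_path_to_scalar[OF A _ c(2) _ d(2)] c d by blast
  then have "graph_dist orth_adj A (mat d) \<le> enat (length [A, Y, mat d] - 1)"
    by (intro graph_dist_le_reflexive_walk) auto
  then show ?thesis
    using d by (intro exI[of _ d]) (simp add: numeral_eq_enat eval_nat_numeral)
qed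

lemma graph_dist_le_4_if_common_det_annihilator:
  fixes A1 A2 :: "'a::comm_ring_1^'n^'n" and z :: 'a
  assumes z: "z \<in> zero_divisors - {0}" and A: "orth_vertex A1" "orth_vertex A2"
    and ann: "Ann (det A1) \<inter> Ann (det A2) \<noteq> {0}"
  shows "graph_dist orth_adj A1 A2 \<le> 4"
proof -
  obtain c0 where "c0 \<noteq> 0" "c0 * det A1 = 0" "c0 * det A2 = 0"
    using ann by (auto simp: Ann_def mult.commute)
  with z obtain c where c: "c \<in> zero_divisors - {0}" "c * det A1 = 0" "c * det A2 = 0"
    using common_annihilator_in_zero_divisors by blast
  then obtain d where d: "d \<noteq> 0" "d * c = 0"
    by (auto simp: zero_divisors_def mult.commute)
  obtain Y1 where Y1: "A1 = Y1 \<or> orth_adj A1 Y1" "Y1 = mat d \<or> orth_adj Y1 (mat d)"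
    using orth_path_to_scalar[OF A(1) _ c(2) d] c by blast
  obtain Y2 where "A2 = Y2 \<or> orth_adj A2 Y2" "Y2 = mat d \<or> orth_adj Y2 (mat d)"
    using orth_path_to_scalar[OF A(2) _ c(3) d] c by blast
  then have Y2: "mat d = Y2 \<or> orth_adj (mat d) Y2" "Y2 = A2 \<or> orth_adj Y2 A2"
    using orth_adj_sym by auto
  from Y1 Y2 have "graph_dist orth_adj A1 A2 \<le> enat (length [A1, Y1, mat d, Y2, A2] - 1)"
    by (intro graph_dist_le_reflexive_walk) simp_all
  then show ?thesis by (simp add: numeral_eq_enat eval_nat_numeral)
qed

theorem corollary3:
  assumes "\<exists>z::'a::comm_ring_1. z \<in> zero_divisors \<and> z \<noteq> 0"
    and "CARD('n) > 1"
  shows "(\<forall>A::'a^'n^'n. orth_vertex A \<longrightarrow>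
            (\<exists>b. b \<in> zero_divisors - {0} \<and> orth_vertex (mat b :: 'a^'n^'n)
                 \<and> graph_dist orth_adj A (mat b) \<le> 2))
       \<and> (\<forall>A1 A2::'a^'n^'n. orth_vertex A1 \<and> orth_vertex A2
            \<and> Ann (det A1) \<inter> Ann (det A2) \<noteq> {0}
            \<longrightarrow> graph_dist orth_adj A1 A2 \<le> 4)"
proof -
  obtain z :: 'a where "z \<in> zero_divisors - {0}" using assms(1) by blast
  then show ?thesis
    using orth_vertex_near_scalar_vertex graph_dist_le_4_if_common_det_annihilator by blast
qed

end
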